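(* Let $Y$ be a real random variable and $\boldsymbol\kappa:\mathbb R\to\mathbb R^p$ a nonzero continuous function such that (i) $\sup_{\|\boldsymbol\beta\|=1}\mathbb E[|\langle\boldsymbol\kappa(Y),\boldsymbol\beta\rangle|^\ell]\le c_1$ for some $\ell>2$ and $c_1>0$, and (ii) $Y$ is a continuous random variable. Let $d'=\dim\mathrm{span}\{\boldsymbol\kappa(y):y\in\mathbb R\}$. Then for every $\tau>1$ there exists $K=K(\tau,d')\ge d'$ such that $\boldsymbol\kappa$ is weak $(K,\tau)$-sliced stable w.r.t. $Y$.
   Context: Fix a small constant $\gamma\in(0,1)$. Weak $(K,\tau)$-sliced stability of a continuous curve $\boldsymbol\kappa$ w.r.t. $Y$: for every $H\ge K$ and every partition $-\infty=a_0<\dots<a_H=\infty$ with $\frac{1-\gamma}{H}\le\mathbb P(a_h\le Y\le a_{h+1})\le\frac{1+\gamma}{H}$ for all $h$, $\frac1H\sum_h\mathrm{var}(\boldsymbol\beta^\top\boldsymbol\kappa(Y)\mid a_h\le Y\le a_{h+1})\le\frac1\tau\mathrm{var}(\boldsymbol\beta^\top\boldsymbol\kappa(Y))$ for all unit $\boldsymbol\beta\in\mathbb R^p$. *)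

theory Defs
  imports "HOL-Probability.Probability"
begin

definition cond_mean_event :: "'a measure \<Rightarrow> ('a \<Rightarrow> real) \<Rightarrow> 'a set \<Rightarrow> real" where
  "cond_mean_event M Z A = (\<integral>x. indicator A x * Z x \<partial>M) / measure M A"

definition cond_var_event :: "'a measure \<Rightarrow> ('a \<Rightarrow> real) \<Rightarrow> 'a set \<Rightarrow> real" where
  "cond_var_event M Z A =
     (\<integral>x. indicator A x * (Z x - cond_mean_event M Z A)^2 \<partial>M) / measure M A"

definition slice_event :: "'a measure \<Rightarrow> ('a \<Rightarrow> real) \<Rightarrow> (nat \<Rightarrow> ereal) \<Rightarrow> nat \<Rightarrow> 'a set" where
  "slice_event M Y a h = {x \<in> space M. a h \<le> ereal (Y x) \<and> ereal (Y x) \<le> a (Suc h)}"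

definition weak_sliced_stable ::
  "real \<Rightarrow> 'a measure \<Rightarrow> ('a \<Rightarrow> real) \<Rightarrow> (real \<Rightarrow> real ^ 'p) \<Rightarrow> nat \<Rightarrow> real \<Rightarrow> bool" where
  "weak_sliced_stable \<gamma> M Y \<kappa> K \<tau> \<longleftrightarrow>
     (\<forall>H::nat. \<forall>a::nat \<Rightarrow> ereal.
        H \<ge> K \<and> a 0 = -\<infinity> \<and> a H = \<infinity> \<and> (\<forall>h<H. a h < a (Suc h)) \<and>
        (\<forall>h<H. (1 - \<gamma>) / real H \<le> measure M (slice_event M Y a h) \<and>
                measure M (slice_event M Y a h) \<le> (1 + \<gamma>) / real H)
        \<longrightarrow> (\<forall>\<beta>::real ^ 'p. norm \<beta> = 1 \<longrightarrow>
              (1 / real H) * (\<Sum>h<H. cond_var_event M (\<lambda>x. \<beta> \<bullet> \<kappa> (Y x)) (slice_event M Y a h))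
              \<le> (1 / \<tau>) * prob_space.variance M (\<lambda>x. \<beta> \<bullet> \<kappa> (Y x))))"

end

theory Submission
  imports Defs
begin

text \<open>
  Let \<open>D\<close> be the subspace of directions \<open>\<beta>\<close> along which \<open>\<beta> \<bullet> \<kappa>(Y)\<close> is almost
  surely constant, and write \<open>\<beta> = z + y\<close> with \<open>y \<in> D\<close>, \<open>z \<perp> D\<close>. Dropping \<open>y\<close> shifts
  \<open>\<beta> \<bullet> \<kappa>(Y)\<close> by an almost sure constant, so it changes neither the variance nor the
  conditional variances. On \<open>D\<^sup>\<bottom>\<close> the variance is a positive definite quadratic form, so
  \<open>m |z|\<^sup>2 \<le> var (z \<bullet> \<kappa>(Y))\<close> by compactness of the unit sphere. On the other hand the
  conditional variance on a slice is at most \<open>|z|\<^sup>2\<close> times the mean square distance of \<open>\<kappa>(Y)\<close>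
  from any centre, and these distances summed over all slices tend to \<open>0\<close> as the number \<open>H\<close>
  of slices grows, uniformly in the partition: \<open>\<kappa>\<close> is uniformly continuous on a large interval
  \<open>[-R, R]\<close>, the tail of \<open>|\<kappa>(Y)|\<^sup>2\<close> outside it is small, and at most \<open>2R/\<eta> + 2\<close> slices
  are wider than \<open>\<eta>\<close> there or straddle \<open>\<plusminus>R\<close>.
\<close>

lemma (in finite_measure) integral_indicator_square_diff:
  fixes Z :: "'a \<Rightarrow> real"
  assumes [measurable]: "A \<in> sets M" "Z \<in> borel_measurable M"
    and Z2: "integrable M (\<lambda>x. (Z x)\<^sup>2)"
  shows "(\<integral>x. indicator A x * (Z x - t)\<^sup>2 \<partial>M) =
    (\<integral>x. indicator A x * (Z x)\<^sup>2 \<partial>M) - 2 * t * (\<integral>x. indicator A x * Z x \<partial>M) + t\<^sup>2 * measure M A"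
proof -
  have Z: "integrable M Z"
    by (rule square_integrable_imp_integrable[OF _ Z2]) measurable
  have ind: "integrable M (\<lambda>x. indicator A x :: real)"
    by (intro integrable_real_indicator) (auto simp: emeasure_eq_measure)
  have "(\<lambda>x. indicator A x * (Z x - t)\<^sup>2) =
      (\<lambda>x. indicator A x * (Z x)\<^sup>2 - 2 * t * (indicator A x * Z x) + t\<^sup>2 * indicator A x)"
    by (auto simp: power2_eq_square algebra_simps)
  then show ?thesis
    using integrable_real_mult_indicator[OF _ Z2, of A] integrable_real_mult_indicator[OF _ Z, of A] ind
    by (simp add: mult.commute)
qed

lemma (in finite_measure) cond_var_event_le:
  fixes Z :: "'a \<Rightarrow> real"
  assumes [measurable]: "A \<in> sets M" "Z \<in> borel_measurable M"
    and pos: "measure M A > 0" and Z2: "integrable M (\<lambda>x. (Z x)\<^sup>2)"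
  shows "cond_var_event M Z A \<le> (\<integral>x. indicator A x * (Z x - c)\<^sup>2 \<partial>M) / measure M A"
proof -
  define I1 where "I1 = (\<integral>x. indicator A x * Z x \<partial>M)"
  define m where "m = cond_mean_event M Z A"
  have I1: "I1 = m * measure M A"
    using pos by (simp add: m_def cond_mean_event_def I1_def)
  have "(\<integral>x. indicator A x * (Z x - m)\<^sup>2 \<partial>M) + measure M A * (m - c)\<^sup>2
      = (\<integral>x. indicator A x * (Z x - c)\<^sup>2 \<partial>M)"
    unfolding integral_indicator_square_diff[OF assms(1,2) Z2] I1_def[symmetric] I1
    by (simp add: power2_eq_square algebra_simps)
  moreover have "0 \<le> measure M A * (m - c)\<^sup>2"
    by simp
  ultimately have "(\<integral>x. indicator A x * (Z x - m)\<^sup>2 \<partial>M) \<le> (\<integral>x. indicator A x * (Z x - c)\<^sup>2 \<partial>M)"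
    by linarith
  then show ?thesis
    using pos by (simp add: cond_var_event_def m_def divide_right_mono)
qed

lemma increasing_partition_mono:
  fixes a :: "nat \<Rightarrow> 'b::order"
  assumes "\<forall>h<H. a h < a (Suc h)" and "i \<le> j" and "j \<le> H"
  shows "a i \<le> a j"
  by (rule lift_Suc_mono_le_ivl[of "{..<H}"]) (use assms in \<open>auto intro: less_imp_le\<close>)

lemma card_partition_crossings:
  fixes a :: "nat \<Rightarrow> 'b::linorder"
  assumes inc: "\<forall>h<H. a h < a (Suc h)"
  shows "card {h. h < H \<and> a h < t \<and> t \<le> a (Suc h)} \<le> 1"
    and "card {h. h < H \<and> a h \<le> t \<and> t < a (Suc h)} \<le> 1"
proof -
  have at_most_one: "card S \<le> 1"
    if "S \<subseteq> {..<H}" and "\<And>h h'. h \<in> S \<Longrightarrow> h' \<in> S \<Longrightarrow> h < h' \<Longrightarrow> False" for S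
  proof -
    have "finite S"
      using that(1) finite_subset by blast
    then show ?thesis
      unfolding One_nat_def card_le_Suc0_iff_eq[OF \<open>finite S\<close>]
      using that(2) linorder_neqE_nat by blast
  qed
  have disjoint: "a (Suc h) \<le> a h'" if "h < h'" "h' < H" for h h'
    using that by (intro increasing_partition_mono[OF inc]) auto
  show "card {h. h < H \<and> a h < t \<and> t \<le> a (Suc h)} \<le> 1"
  proof (rule at_most_one)
    fix h h' assume "h \<in> {h. h < H \<and> a h < t \<and> t \<le> a (Suc h)}"
      and "h' \<in> {h. h < H \<and> a h < t \<and> t \<le> a (Suc h)}" and "h < h'"
    then show False
      using disjoint[of h h'] by (metis mem_Collect_eq not_le order.trans)
  qed auto
  show "card {h. h < H \<and> a h \<le> t \<and> t < a (Suc h)} \<le> 1"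
  proof (rule at_most_one)
    fix h h' assume "h \<in> {h. h < H \<and> a h \<le> t \<and> t < a (Suc h)}"
      and "h' \<in> {h. h < H \<and> a h \<le> t \<and> t < a (Suc h)}" and "h < h'"
    then show False
      using disjoint[of h h'] by (metis mem_Collect_eq not_le order.strict_trans2)
  qed auto
qed

lemma card_partition_cover:
  fixes a :: "nat \<Rightarrow> 'b::linorder"
  assumes inc: "\<forall>h<H. a h < a (Suc h)"
  shows "card {h. h < H \<and> a h \<le> t \<and> t \<le> a (Suc h)} \<le> 2"
proof -
  let ?L = "{h. h < H \<and> a h < t \<and> t \<le> a (Suc h)}"
  let ?R = "{h. h < H \<and> a h \<le> t \<and> t < a (Suc h)}"
  have "{h. h < H \<and> a h \<le> t \<and> t \<le> a (Suc h)} \<subseteq> ?L \<union> ?R"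
  proof
    fix h assume h: "h \<in> {h. h < H \<and> a h \<le> t \<and> t \<le> a (Suc h)}"
    show "h \<in> ?L \<union> ?R"
    proof (cases "a h < t")
      case False
      with h have "a h = t"
        by simp
      moreover have "a h < a (Suc h)"
        using h inc by simp
      ultimately show ?thesis
        using h by simp
    qed (use h in simp)
  qed
  moreover have "finite (?L \<union> ?R)"
    by (rule finite_subset[of _ "{..<H}"]) auto
  ultimately have "card {h. h < H \<and> a h \<le> t \<and> t \<le> a (Suc h)} \<le> card (?L \<union> ?R)"
    by (rule card_mono[rotated])
  also have "\<dots> \<le> card ?L + card ?R"
    by (rule card_Un_le)
  finally have "card {h. h < H \<and> a h \<le> t \<and> t \<le> a (Suc h)} \<le> card ?L + card ?R" .
  then show ?thesis
    using card_partition_crossings[OF inc, of t] by linarith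
qed

lemma sum_indicator_slice_event_le_2:
  assumes "\<forall>h<H. a h < a (Suc h)"
  shows "(\<Sum>h<H. indicator (slice_event M Y a h) x) \<le> (2::real)"
proof -
  have "(\<Sum>h<H. indicator (slice_event M Y a h) x :: real) =
      real (card ({..<H} \<inter> {h. x \<in> slice_event M Y a h}))"
    by (simp add: indicator_def of_bool_def sum.If_cases)
  also have "\<dots> \<le> real (card {h. h < H \<and> a h \<le> ereal (Y x) \<and> ereal (Y x) \<le> a (Suc h)})"
    by (intro of_nat_mono card_mono) (auto simp: slice_event_def)
  also have "\<dots> \<le> 2"
    using card_partition_cover[OF assms] by simp
  finally show ?thesis .
qed

definition ereal_clamp :: "real \<Rightarrow> ereal \<Rightarrow> real" where
  "ereal_clamp R t = (if t \<le> ereal (-R) then -R else if ereal R \<le> t then R else real_of_ereal t)"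

lemma ereal_clamp_bounds: "R \<ge> 0 \<Longrightarrow> -R \<le> ereal_clamp R t \<and> ereal_clamp R t \<le> R"
  by (cases t) (auto simp: ereal_clamp_def)

lemma ereal_clamp_mono: "R \<ge> 0 \<Longrightarrow> t \<le> t' \<Longrightarrow> ereal_clamp R t \<le> ereal_clamp R t'"
  by (cases t; cases t') (auto simp: ereal_clamp_def)

lemma ereal_clamp_le: "-R \<le> y \<Longrightarrow> y \<le> R \<Longrightarrow> t \<le> ereal y \<Longrightarrow> ereal_clamp R t \<le> y"
  by (cases t) (auto simp: ereal_clamp_def)

lemma ereal_clamp_ge: "-R \<le> y \<Longrightarrow> y \<le> R \<Longrightarrow> ereal y \<le> t \<Longrightarrow> y \<le> ereal_clamp R t"
  by (cases t) (auto simp: ereal_clamp_def)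

lemma ereal_clamp_infinity [simp]: "R \<ge> 0 \<Longrightarrow> ereal_clamp R (-\<infinity>) = -R" "R \<ge> 0 \<Longrightarrow> ereal_clamp R \<infinity> = R"
  by (auto simp: ereal_clamp_def)

text \<open>The clamped slice widths telescope to the length \<open>2 R\<close> of \<open>[-R, R]\<close>.\<close>

lemma card_wide_clamped_slices:
  fixes a :: "nat \<Rightarrow> ereal"
  assumes inc: "\<forall>h<H. a h < a (Suc h)" and "a 0 = -\<infinity>" "a H = \<infinity>" "R \<ge> 0" "\<eta> > 0"
  shows "real (card {h. h < H \<and> \<eta> < ereal_clamp R (a (Suc h)) - ereal_clamp R (a h)}) \<le> 2 * R / \<eta>"
proof -
  let ?D = "{h. h < H \<and> \<eta> < ereal_clamp R (a (Suc h)) - ereal_clamp R (a h)}"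
  have "real (card ?D) * \<eta> \<le> (\<Sum>h\<in>?D. ereal_clamp R (a (Suc h)) - ereal_clamp R (a h))"
    by (intro sum_bounded_below) auto
  also have "\<dots> \<le> (\<Sum>h<H. ereal_clamp R (a (Suc h)) - ereal_clamp R (a h))"
    using inc \<open>R \<ge> 0\<close> by (intro sum_mono2) (auto intro: ereal_clamp_mono less_imp_le)
  also have "\<dots> = 2 * R"
    using assms sum_lessThan_telescope[of "\<lambda>h. ereal_clamp R (a h)" H] by simp
  finally show ?thesis
    using \<open>\<eta> > 0\<close> by (simp add: field_simps)
qed

definition short_inner_slice :: "real \<Rightarrow> real \<Rightarrow> ereal \<Rightarrow> ereal \<Rightarrow> bool" where
  "short_inner_slice R \<eta> s t \<longleftrightarrow>
     ereal (-R) \<le> s \<and> t \<le> ereal R \<and> ereal_clamp R t - ereal_clamp R s \<le> \<eta>"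

definition exceptional_slice :: "real \<Rightarrow> real \<Rightarrow> ereal \<Rightarrow> ereal \<Rightarrow> bool" where
  "exceptional_slice R \<eta> s t \<longleftrightarrow>
     (s < ereal (-R) \<and> ereal (-R) \<le> t) \<or> (s \<le> ereal R \<and> ereal R < t) \<or>
     \<eta> < ereal_clamp R t - ereal_clamp R s"

lemma card_exceptional_slices:
  fixes a :: "nat \<Rightarrow> ereal"
  assumes inc: "\<forall>h<H. a h < a (Suc h)" and "a 0 = -\<infinity>" "a H = \<infinity>" "R \<ge> 0" "\<eta> > 0"
  shows "real (card {h. h < H \<and> exceptional_slice R \<eta> (a h) (a (Suc h))}) \<le> 2 * R / \<eta> + 2"
proof -
  let ?L = "{h. h < H \<and> a h < ereal (-R) \<and> ereal (-R) \<le> a (Suc h)}"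
  let ?R = "{h. h < H \<and> a h \<le> ereal R \<and> ereal R < a (Suc h)}"
  let ?D = "{h. h < H \<and> \<eta> < ereal_clamp R (a (Suc h)) - ereal_clamp R (a h)}"
  have "{h. h < H \<and> exceptional_slice R \<eta> (a h) (a (Suc h))} = ?L \<union> ?R \<union> ?D"
    by (auto simp: exceptional_slice_def)
  then have "card {h. h < H \<and> exceptional_slice R \<eta> (a h) (a (Suc h))} \<le> card ?L + card ?R + card ?D"
    by (metis (no_types, lifting) card_Un_le add_le_mono1 order_trans)
  moreover have "card ?L \<le> 1" "card ?R \<le> 1"
    using card_partition_crossings[OF inc] by blast+
  ultimately show ?thesis
    using card_wide_clamped_slices[OF assms] by linarith
qed

lemma sum_exceptional_slices_le:
  fixes a :: "nat \<Rightarrow> ereal" and P :: "nat \<Rightarrow> real"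
  assumes "\<forall>h<H. a h < a (Suc h)" and "a 0 = -\<infinity>" "a H = \<infinity>" "R \<ge> 0" "\<eta> > 0"
    and "c \<ge> 0" and small: "\<forall>h<H. P h \<le> c / real H"
  shows "(\<Sum>h<H. (if exceptional_slice R \<eta> (a h) (a (Suc h)) then B\<^sup>2 else 0) * P h)
    \<le> B\<^sup>2 * c * (2 * R / \<eta> + 2) / real H"
proof -
  let ?E = "{h. h < H \<and> exceptional_slice R \<eta> (a h) (a (Suc h))}"
  have "(\<Sum>h<H. (if exceptional_slice R \<eta> (a h) (a (Suc h)) then B\<^sup>2 else 0) * P h)
      \<le> (\<Sum>h<H. if exceptional_slice R \<eta> (a h) (a (Suc h)) then B\<^sup>2 * (c / real H) else 0)"
  proof (rule sum_mono)
    fix h assume "h \<in> {..<H}"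
    then have "B\<^sup>2 * P h \<le> B\<^sup>2 * (c / real H)"
      using small by (intro mult_left_mono) auto
    then show "(if exceptional_slice R \<eta> (a h) (a (Suc h)) then B\<^sup>2 else 0) * P h
        \<le> (if exceptional_slice R \<eta> (a h) (a (Suc h)) then B\<^sup>2 * (c / real H) else 0)"
      by simp
  qed
  also have "\<dots> = real (card ?E) * (B\<^sup>2 * (c / real H))"
  proof -
    have "{..<H} \<inter> {h. exceptional_slice R \<eta> (a h) (a (Suc h))} = ?E"
      by auto
    then show ?thesis
      by (simp add: sum.If_cases)
  qed
  also have "\<dots> \<le> (2 * R / \<eta> + 2) * (B\<^sup>2 * (c / real H))"
    using card_exceptional_slices[OF assms(1-5)] \<open>c \<ge> 0\<close> by (intro mult_right_mono) auto
  finally show ?thesis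
    by (simp add: mult_ac)
qed

text \<open>
  Short slices inside \<open>[-R, R]\<close> are centred at the value of \<open>f\<close> at their clamped left end, all
  others at \<open>0\<close>: their mass outside \<open>[-R, R]\<close> is then charged to the tail of \<open>|f|\<^sup>2\<close>, and their
  mass inside to the few exceptional slices.
\<close>

definition slice_center :: "(real \<Rightarrow> 'b::zero) \<Rightarrow> real \<Rightarrow> real \<Rightarrow> ereal \<Rightarrow> ereal \<Rightarrow> 'b" where
  "slice_center f R \<eta> s t = (if short_inner_slice R \<eta> s t then f (ereal_clamp R s) else 0)"

lemma square_dist_slice_center_le:
  fixes f :: "real \<Rightarrow> 'b::real_normed_vector"
  assumes close: "\<And>y y'. y \<in> {-R..R} \<Longrightarrow> y' \<in> {-R..R} \<Longrightarrow> \<bar>y - y'\<bar> \<le> \<eta> \<Longrightarrow> (norm (f y - f y'))\<^sup>2 \<le> \<epsilon>"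
    and bound: "\<And>y. y \<in> {-R..R} \<Longrightarrow> norm (f y) \<le> B"
    and "R \<ge> 0" and "\<epsilon> \<ge> 0" and slice: "s \<le> ereal y" "ereal y \<le> t"
  shows "(norm (f y - slice_center f R \<eta> s t))\<^sup>2 \<le>
    \<epsilon> + (if R < \<bar>y\<bar> then (norm (f y))\<^sup>2 else 0) + (if exceptional_slice R \<eta> s t then B\<^sup>2 else 0)"
proof -
  consider (short) "short_inner_slice R \<eta> s t" | (outer) "\<not> short_inner_slice R \<eta> s t" "R < \<bar>y\<bar>"
    | (exceptional) "\<not> short_inner_slice R \<eta> s t" "\<bar>y\<bar> \<le> R"
    by linarith
  then show ?thesis
  proof cases
    case short
    then have "ereal (-R) \<le> ereal y" "ereal y \<le> ereal R"
      using slice short unfolding short_inner_slice_def by (meson order_trans)+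
    then have y: "y \<in> {-R..R}"
      by simp
    then have "\<bar>y - ereal_clamp R s\<bar> \<le> \<eta>"
      using short slice ereal_clamp_le[of R y s] ereal_clamp_ge[of R y t]
      by (auto simp: short_inner_slice_def)
    then have "(norm (f y - f (ereal_clamp R s)))\<^sup>2 \<le> \<epsilon>"
      using y ereal_clamp_bounds[OF \<open>R \<ge> 0\<close>] by (intro close) auto
    then show ?thesis
      using short by (simp add: slice_center_def add_increasing2)
  next
    case outer
    then show ?thesis
      using \<open>0 \<le> \<epsilon>\<close> by (simp add: slice_center_def)
  next
    case exceptional
    have "exceptional_slice R \<eta> s t"
      using exceptional slice unfolding short_inner_slice_def exceptional_slice_def
      by (smt (verit, ccfv_threshold) ereal_less_eq(3) linorder_not_le order_trans)
    moreover have "(norm (f y))\<^sup>2 \<le> B\<^sup>2"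
      using bound[of y] exceptional by (intro power_mono) (auto simp: abs_le_iff)
    ultimately show ?thesis
      using exceptional \<open>0 \<le> \<epsilon>\<close> by (simp add: slice_center_def)
  qed
qed

lemma integral_tail_small:
  fixes g Y :: "'a \<Rightarrow> real"
  assumes g: "integrable M g" and [measurable]: "Y \<in> borel_measurable M" and "e > 0"
  shows "\<exists>R\<ge>0. (\<integral>x. g x * indicator {x\<in>space M. R < \<bar>Y x\<bar>} x \<partial>M) < e"
proof -
  define s where "s n x = g x * indicator {x\<in>space M. real n < \<bar>Y x\<bar>} x" for n :: nat and x
  have "(\<lambda>n. integral\<^sup>L M (s n)) \<longlonglongrightarrow> integral\<^sup>L M (\<lambda>x. 0)"
  proof (rule integral_dominated_convergence[where w = "\<lambda>x. norm (g x)"])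
    show "AE x in M. (\<lambda>n. s n x) \<longlonglongrightarrow> 0"
    proof (intro AE_I2 tendsto_eventually)
      fix x
      show "\<forall>\<^sub>F n in sequentially. s n x = 0"
        unfolding eventually_sequentially s_def
        by (intro exI[of _ "nat \<lceil>\<bar>Y x\<bar>\<rceil>"]) (auto simp: indicator_def)
    qed
    have [measurable]: "g \<in> borel_measurable M"
      using g by (rule borel_measurable_integrable)
    show "s n \<in> borel_measurable M" for n
      unfolding s_def by measurable
    show "integrable M (\<lambda>x. norm (g x))"
      using g by simp
    show "AE x in M. norm (s n x) \<le> norm (g x)" for n
      by (intro AE_I2) (simp add: s_def indicator_def)
  qed simp
  then have "\<forall>\<^sub>F n in sequentially. integral\<^sup>L M (s n) < e"
    using \<open>e > 0\<close> by (intro order_tendstoD(2)) auto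
  then obtain n where "integral\<^sup>L M (s n) < e"
    by (auto simp: eventually_sequentially)
  then show ?thesis
    unfolding s_def by (intro exI[of _ "real n"]) auto
qed

locale curve_of_random_variable = prob_space M for M :: "'a measure" +
  fixes Y :: "'a \<Rightarrow> real" and \<kappa> :: "real \<Rightarrow> 'b::euclidean_space"
  assumes Y_measurable [measurable]: "Y \<in> borel_measurable M"
    and continuous_\<kappa>: "continuous_on UNIV \<kappa>"
    and square_integrable_\<kappa>: "integrable M (\<lambda>x. (norm (\<kappa> (Y x)))\<^sup>2)"
begin

lemma \<kappa>_Y_measurable [measurable]: "(\<lambda>x. \<kappa> (Y x)) \<in> borel_measurable M"
  using measurable_compose[OF Y_measurable borel_measurable_continuous_onI[OF continuous_\<kappa>]]
  by (simp add: o_def)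

lemma slice_event_sets [measurable]: "slice_event M Y a h \<in> sets M"
  unfolding slice_event_def by measurable

lemma integrable_\<kappa>: "integrable M (\<lambda>x. \<kappa> (Y x))"
proof (rule Bochner_Integration.integrable_bound)
  show "integrable M (\<lambda>x. 1 + (norm (\<kappa> (Y x)))\<^sup>2)"
    using square_integrable_\<kappa> by simp
  have "t \<le> 1 + t\<^sup>2" for t :: real
  proof -
    have "0 \<le> (t - 1)\<^sup>2"
      by simp
    then have "2 * t \<le> 1 + t\<^sup>2"
      by (simp add: power2_eq_square algebra_simps)
    then show ?thesis
      using zero_le_power2[of t] by linarith
  qed
  then show "AE x in M. norm (\<kappa> (Y x)) \<le> norm (1 + (norm (\<kappa> (Y x)))\<^sup>2)"
    by (intro AE_I2) (simp add: add_nonneg_nonneg)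
qed measurable

lemma integrable_square_dist: "integrable M (\<lambda>x. (norm (\<kappa> (Y x) - v))\<^sup>2)"
proof (rule Bochner_Integration.integrable_bound)
  show "integrable M (\<lambda>x. 2 * (norm (\<kappa> (Y x)))\<^sup>2 + 2 * (norm v)\<^sup>2)"
    using square_integrable_\<kappa> by simp
  have "(norm (u - v))\<^sup>2 \<le> 2 * (norm u)\<^sup>2 + 2 * (norm v)\<^sup>2" for u :: 'b
  proof -
    have "(norm (u - v))\<^sup>2 \<le> (norm u + norm v)\<^sup>2"
      by (intro power_mono norm_triangle_ineq4) auto
    also have "\<dots> \<le> 2 * (norm u)\<^sup>2 + 2 * (norm v)\<^sup>2"
      using zero_le_power2[of "norm u - norm v"] by (simp add: power2_eq_square algebra_simps)
    finally show ?thesis .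
  qed
  then show "AE x in M. norm ((norm (\<kappa> (Y x) - v))\<^sup>2) \<le> norm (2 * (norm (\<kappa> (Y x)))\<^sup>2 + 2 * (norm v)\<^sup>2)"
    by (intro AE_I2) (simp add: add_nonneg_nonneg)
qed measurable

lemma integrable_square_inner_diff: "integrable M (\<lambda>x. (\<beta> \<bullet> (\<kappa> (Y x) - v))\<^sup>2)"
proof (rule Bochner_Integration.integrable_bound)
  show "integrable M (\<lambda>x. (norm \<beta>)\<^sup>2 * (norm (\<kappa> (Y x) - v))\<^sup>2)"
    using integrable_square_dist by simp
  have "(\<beta> \<bullet> w)\<^sup>2 \<le> (norm \<beta>)\<^sup>2 * (norm w)\<^sup>2" for w :: 'b
  proof -
    have "\<bar>\<beta> \<bullet> w\<bar>\<^sup>2 \<le> (norm \<beta> * norm w)\<^sup>2"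
      by (intro power_mono Cauchy_Schwarz_ineq2) auto
    then show ?thesis
      by (simp add: power_mult_distrib)
  qed
  then show "AE x in M. norm ((\<beta> \<bullet> (\<kappa> (Y x) - v))\<^sup>2) \<le> norm ((norm \<beta>)\<^sup>2 * (norm (\<kappa> (Y x) - v))\<^sup>2)"
    by (intro AE_I2) simp
qed measurable

lemma sum_slice_square_dist_le:
  assumes inc: "\<forall>h<H. a h < a (Suc h)"
    and close: "\<And>y y'. y \<in> {-R..R} \<Longrightarrow> y' \<in> {-R..R} \<Longrightarrow> \<bar>y - y'\<bar> \<le> \<eta> \<Longrightarrow> (norm (\<kappa> y - \<kappa> y'))\<^sup>2 \<le> \<epsilon>"
    and bound: "\<And>y. y \<in> {-R..R} \<Longrightarrow> norm (\<kappa> y) \<le> B"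
    and "R \<ge> 0" and "\<epsilon> \<ge> 0"
  shows "(\<Sum>h<H. \<integral>x. indicator (slice_event M Y a h) x *
            (norm (\<kappa> (Y x) - slice_center \<kappa> R \<eta> (a h) (a (Suc h))))\<^sup>2 \<partial>M)
    \<le> \<epsilon> * (\<Sum>h<H. prob (slice_event M Y a h))
      + 2 * (\<integral>x. (norm (\<kappa> (Y x)))\<^sup>2 * indicator {x\<in>space M. R < \<bar>Y x\<bar>} x \<partial>M)
      + (\<Sum>h<H. (if exceptional_slice R \<eta> (a h) (a (Suc h)) then B\<^sup>2 else 0) * prob (slice_event M Y a h))"
proof -
  define A where "A h = slice_event M Y a h" for h
  define tail where "tail x = (norm (\<kappa> (Y x)))\<^sup>2 * indicator {x\<in>space M. R < \<bar>Y x\<bar>} x" for x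
  define c where "c h = (if exceptional_slice R \<eta> (a h) (a (Suc h)) then B\<^sup>2 else 0)" for h
  have [measurable]: "A h \<in> sets M" "tail \<in> borel_measurable M" for h
    unfolding A_def tail_def by measurable
  have tail_nonneg: "0 \<le> tail x" for x
    by (simp add: tail_def)
  have integrable_tail: "integrable M tail"
    unfolding tail_def by (rule integrable_real_mult_indicator) (auto intro: square_integrable_\<kappa>)
  have integrable_slice_tail: "integrable M (\<lambda>x. indicator (A h) x * tail x)" for h
    using integrable_real_mult_indicator[OF _ integrable_tail] by (simp add: mult.commute)
  have integrable_slice: "integrable M (\<lambda>x. indicator (A h) x :: real)" for h
    by (intro integrable_real_indicator) (auto simp: emeasure_eq_measure)
  have pointwise: "indicator (A h) x * (norm (\<kappa> (Y x) - slice_center \<kappa> R \<eta> (a h) (a (Suc h))))\<^sup>2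
      \<le> \<epsilon> * indicator (A h) x + indicator (A h) x * tail x + c h * indicator (A h) x"
    if "x \<in> space M" for h x
  proof (cases "x \<in> A h")
    case True
    then have "a h \<le> ereal (Y x)" "ereal (Y x) \<le> a (Suc h)"
      by (auto simp: A_def slice_event_def)
    from square_dist_slice_center_le[where f = \<kappa> and \<eta> = \<eta>, OF close bound \<open>R \<ge> 0\<close> \<open>\<epsilon> \<ge> 0\<close> this]
    show ?thesis
      using True that by (simp add: tail_def c_def indicator_def split: if_split_asm)
  qed simp
  have "(\<Sum>h<H. \<integral>x. indicator (A h) x * (norm (\<kappa> (Y x) - slice_center \<kappa> R \<eta> (a h) (a (Suc h))))\<^sup>2 \<partial>M)
      \<le> (\<Sum>h<H. \<integral>x. \<epsilon> * indicator (A h) x + indicator (A h) x * tail x + c h * indicator (A h) x \<partial>M)"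
    using pointwise integrable_slice integrable_slice_tail tail_nonneg \<open>\<epsilon> \<ge> 0\<close>
    by (intro sum_mono integral_mono') (auto simp: c_def)
  also have "\<dots> = \<epsilon> * (\<Sum>h<H. prob (A h)) + (\<Sum>h<H. \<integral>x. indicator (A h) x * tail x \<partial>M)
      + (\<Sum>h<H. c h * prob (A h))"
    using integrable_slice integrable_slice_tail by (simp add: sum.distrib sum_distrib_left)
  also have "(\<Sum>h<H. \<integral>x. indicator (A h) x * tail x \<partial>M) = (\<integral>x. (\<Sum>h<H. indicator (A h) x * tail x) \<partial>M)"
    using Bochner_Integration.integral_sum[where I = "{..<H}" and f = "\<lambda>h x. indicator (A h) x * tail x"]
      integrable_slice_tail by simp
  also have "\<dots> \<le> (\<integral>x. 2 * tail x \<partial>M)"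
  proof (rule integral_mono')
    fix x
    have "(\<Sum>h<H. indicator (A h) x) * tail x \<le> 2 * tail x"
      using sum_indicator_slice_event_le_2[OF inc] tail_nonneg by (intro mult_right_mono) (auto simp: A_def)
    then show "(\<Sum>h<H. indicator (A h) x * tail x) \<le> 2 * tail x"
      by (simp add: sum_distrib_right)
  qed (use integrable_tail tail_nonneg in auto)
  finally show ?thesis
    by (simp add: A_def tail_def c_def sum_distrib_left)
qed

lemma approximation_scales:
  assumes "e > 0" and "\<epsilon> > 0"
  obtains R \<eta> B where "R \<ge> 0" and "\<eta> > 0"
    and "(\<integral>x. (norm (\<kappa> (Y x)))\<^sup>2 * indicator {x\<in>space M. R < \<bar>Y x\<bar>} x \<partial>M) < e"
    and "\<And>y y'. y \<in> {-R..R} \<Longrightarrow> y' \<in> {-R..R} \<Longrightarrow> \<bar>y - y'\<bar> \<le> \<eta> \<Longrightarrow> (norm (\<kappa> y - \<kappa> y'))\<^sup>2 \<le> \<epsilon>"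
    and "\<And>y. y \<in> {-R..R} \<Longrightarrow> norm (\<kappa> y) \<le> B"
proof -
  obtain R where "R \<ge> 0" and tail: "(\<integral>x. (norm (\<kappa> (Y x)))\<^sup>2 * indicator {x\<in>space M. R < \<bar>Y x\<bar>} x \<partial>M) < e"
    using integral_tail_small[OF square_integrable_\<kappa> Y_measurable \<open>e > 0\<close>] by auto
  have "uniformly_continuous_on {-R..R} \<kappa>"
    by (intro compact_uniformly_continuous continuous_on_subset[OF continuous_\<kappa>]) auto
  then obtain \<eta> where "\<eta> > 0" and
    \<eta>: "\<And>y y'. y \<in> {-R..R} \<Longrightarrow> y' \<in> {-R..R} \<Longrightarrow> dist y' y < \<eta> \<Longrightarrow> dist (\<kappa> y') (\<kappa> y) < sqrt \<epsilon>"
    using \<open>\<epsilon> > 0\<close> unfolding uniformly_continuous_on_def by (meson real_sqrt_gt_zero)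
  have close: "(norm (\<kappa> y - \<kappa> y'))\<^sup>2 \<le> \<epsilon>"
    if "y \<in> {-R..R}" "y' \<in> {-R..R}" "\<bar>y - y'\<bar> \<le> \<eta> / 2" for y y'
  proof -
    have "norm (\<kappa> y - \<kappa> y') < sqrt \<epsilon>"
      using \<eta>[OF that(2,1)] that(3) \<open>\<eta> > 0\<close> by (simp add: dist_norm)
    then have "(norm (\<kappa> y - \<kappa> y'))\<^sup>2 < (sqrt \<epsilon>)\<^sup>2"
      by (intro power_strict_mono) auto
    then show ?thesis
      using \<open>\<epsilon> > 0\<close> by simp
  qed
  have "bounded (\<kappa> ` {-R..R})"
    by (intro compact_imp_bounded compact_continuous_image continuous_on_subset[OF continuous_\<kappa>]) auto
  then obtain B where "\<forall>w\<in>\<kappa> ` {-R..R}. norm w \<le> B"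
    unfolding bounded_iff by blast
  then have "\<And>y. y \<in> {-R..R} \<Longrightarrow> norm (\<kappa> y) \<le> B"
    by blast
  then show ?thesis
    using \<open>R \<ge> 0\<close> \<open>\<eta> > 0\<close> tail close by (intro that[of R "\<eta> / 2" B]) auto
qed

lemma slices_approximable:
  assumes "e > 0" and "c > 0"
  obtains K where "\<And>H a. K \<le> H \<Longrightarrow> a 0 = -\<infinity> \<Longrightarrow> a H = \<infinity> \<Longrightarrow> \<forall>h<H. a h < a (Suc h) \<Longrightarrow>
      \<forall>h<H. prob (slice_event M Y a h) \<le> c / real H \<Longrightarrow>
      \<exists>v. (\<Sum>h<H. \<integral>x. indicator (slice_event M Y a h) x * (norm (\<kappa> (Y x) - v h))\<^sup>2 \<partial>M) \<le> e"
proof -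
  txt \<open>One third of \<open>e\<close> each for continuity, the tail (counted twice, since neighbouring slices
    share endpoints) and the exceptional slices.\<close>
  define \<epsilon> where "\<epsilon> = e / (3 * c)"
  have "e / 6 > 0" and "\<epsilon> > 0"
    using assms by (simp_all add: \<epsilon>_def)
  then obtain R \<eta> B where "R \<ge> 0" "\<eta> > 0"
    and tail: "(\<integral>x. (norm (\<kappa> (Y x)))\<^sup>2 * indicator {x\<in>space M. R < \<bar>Y x\<bar>} x \<partial>M) < e / 6"
    and close: "\<And>y y'. y \<in> {-R..R} \<Longrightarrow> y' \<in> {-R..R} \<Longrightarrow> \<bar>y - y'\<bar> \<le> \<eta> \<Longrightarrow> (norm (\<kappa> y - \<kappa> y'))\<^sup>2 \<le> \<epsilon>"
    and bound: "\<And>y. y \<in> {-R..R} \<Longrightarrow> norm (\<kappa> y) \<le> B"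
    using approximation_scales by blast
  define C where "C = 3 * B\<^sup>2 * c * (2 * R / \<eta> + 2) / e"
  show ?thesis
  proof (rule that[of "nat \<lceil>C\<rceil> + 1"])
    fix H :: nat and a :: "nat \<Rightarrow> ereal"
    assume "nat \<lceil>C\<rceil> + 1 \<le> H" and partition: "a 0 = -\<infinity>" "a H = \<infinity>" "\<forall>h<H. a h < a (Suc h)"
      and small: "\<forall>h<H. prob (slice_event M Y a h) \<le> c / real H"
    have "C < real H" and "H > 0"
      using \<open>nat \<lceil>C\<rceil> + 1 \<le> H\<close> by linarith+
    have "\<epsilon> * (\<Sum>h<H. prob (slice_event M Y a h)) \<le> \<epsilon> * (real H * (c / real H))"
      using small \<open>\<epsilon> > 0\<close> sum_bounded_above[of "{..<H}" _ "c / real H"] by (simp add: mult_left_mono)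
    also have "\<dots> = e / 3"
      using \<open>H > 0\<close> \<open>c > 0\<close> by (simp add: \<epsilon>_def)
    finally have central: "\<epsilon> * (\<Sum>h<H. prob (slice_event M Y a h)) \<le> e / 3" .
    have "B\<^sup>2 * c * (2 * R / \<eta> + 2) / real H \<le> e / 3"
      using \<open>C < real H\<close> \<open>e > 0\<close> \<open>H > 0\<close> by (simp add: C_def field_simps)
    then have exceptional: "(\<Sum>h<H. (if exceptional_slice R \<eta> (a h) (a (Suc h)) then B\<^sup>2 else 0) *
        prob (slice_event M Y a h)) \<le> e / 3"
      using sum_exceptional_slices_le[OF partition(3,1,2) \<open>R \<ge> 0\<close> \<open>\<eta> > 0\<close> less_imp_le[OF \<open>c > 0\<close>] small, of B]
      by linarith
    show "\<exists>v. (\<Sum>h<H. \<integral>x. indicator (slice_event M Y a h) x * (norm (\<kappa> (Y x) - v h))\<^sup>2 \<partial>M) \<le> e"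
      using sum_slice_square_dist_le[where \<eta> = \<eta> and \<epsilon> = \<epsilon>, OF partition(3) close bound \<open>R \<ge> 0\<close>]
        \<open>\<epsilon> > 0\<close> central exceptional tail
      by (intro exI[of _ "\<lambda>h. slice_center \<kappa> R \<eta> (a h) (a (Suc h))"]) simp
  qed
qed

definition degenerate_directions :: "'b set" where
  "degenerate_directions = {\<beta>. \<exists>c. AE x in M. \<beta> \<bullet> \<kappa> (Y x) = c}"

lemma subspace_degenerate_directions: "subspace degenerate_directions"
  unfolding subspace_def
proof (intro conjI ballI allI)
  show "0 \<in> degenerate_directions"
    by (auto simp: degenerate_directions_def)
next
  fix u w assume "u \<in> degenerate_directions" "w \<in> degenerate_directions"
  then obtain c d where "AE x in M. u \<bullet> \<kappa> (Y x) = c" "AE x in M. w \<bullet> \<kappa> (Y x) = d"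
    by (auto simp: degenerate_directions_def)
  then have "AE x in M. (u + w) \<bullet> \<kappa> (Y x) = c + d"
    by eventually_elim (simp add: inner_add_left)
  then show "u + w \<in> degenerate_directions"
    by (auto simp: degenerate_directions_def)
next
  fix t :: real and u assume "u \<in> degenerate_directions"
  then obtain c where "AE x in M. u \<bullet> \<kappa> (Y x) = c"
    by (auto simp: degenerate_directions_def)
  then have "AE x in M. (t *\<^sub>R u) \<bullet> \<kappa> (Y x) = t * c"
    by eventually_elim simp
  then show "t *\<^sub>R u \<in> degenerate_directions"
    by (auto simp: degenerate_directions_def)
qed

lemma integrable_inner_\<kappa>: "integrable M (\<lambda>x. \<beta> \<bullet> \<kappa> (Y x))"
  using integrable_\<kappa> by simp

lemma square_integrable_inner_\<kappa>: "integrable M (\<lambda>x. (\<beta> \<bullet> \<kappa> (Y x))\<^sup>2)"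
  using integrable_square_inner_diff[of \<beta> 0] by simp

lemma variance_inner_eq_quadratic_form:
  "variance (\<lambda>x. \<beta> \<bullet> \<kappa> (Y x)) =
     (\<Sum>i\<in>Basis. \<Sum>j\<in>Basis. (\<beta> \<bullet> i) * (\<beta> \<bullet> j) * expectation (\<lambda>x. (\<kappa> (Y x) \<bullet> i) * (\<kappa> (Y x) \<bullet> j)))
     - (\<beta> \<bullet> expectation (\<lambda>x. \<kappa> (Y x)))\<^sup>2"
proof -
  have integrable_product: "integrable M (\<lambda>x. (\<kappa> (Y x) \<bullet> i) * (\<kappa> (Y x) \<bullet> j))" for i j :: 'b
  proof (rule Bochner_Integration.integrable_bound)
    show "integrable M (\<lambda>x. norm i * norm j * (norm (\<kappa> (Y x)))\<^sup>2)"
      using square_integrable_\<kappa> by simp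
    show "AE x in M. norm ((\<kappa> (Y x) \<bullet> i) * (\<kappa> (Y x) \<bullet> j)) \<le> norm (norm i * norm j * (norm (\<kappa> (Y x)))\<^sup>2)"
    proof (intro AE_I2)
      fix x
      have "\<bar>\<kappa> (Y x) \<bullet> i\<bar> * \<bar>\<kappa> (Y x) \<bullet> j\<bar> \<le> (norm (\<kappa> (Y x)) * norm i) * (norm (\<kappa> (Y x)) * norm j)"
        by (intro mult_mono Cauchy_Schwarz_ineq2) auto
      then show "norm ((\<kappa> (Y x) \<bullet> i) * (\<kappa> (Y x) \<bullet> j)) \<le> norm (norm i * norm j * (norm (\<kappa> (Y x)))\<^sup>2)"
        by (simp add: abs_mult power2_eq_square mult_ac)
    qed
  qed measurable
  have "(\<beta> \<bullet> \<kappa> (Y x))\<^sup>2 = (\<Sum>i\<in>Basis. \<Sum>j\<in>Basis. (\<beta> \<bullet> i) * (\<beta> \<bullet> j) * ((\<kappa> (Y x) \<bullet> i) * (\<kappa> (Y x) \<bullet> j)))"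
    for x
    by (subst euclidean_inner) (simp add: power2_eq_square sum_product mult_ac)
  then have square: "expectation (\<lambda>x. (\<beta> \<bullet> \<kappa> (Y x))\<^sup>2) =
      (\<Sum>i\<in>Basis. \<Sum>j\<in>Basis. (\<beta> \<bullet> i) * (\<beta> \<bullet> j) * expectation (\<lambda>x. (\<kappa> (Y x) \<bullet> i) * (\<kappa> (Y x) \<bullet> j)))"
    using integrable_product by simp
  have mean: "expectation (\<lambda>x. \<beta> \<bullet> \<kappa> (Y x)) = \<beta> \<bullet> expectation (\<lambda>x. \<kappa> (Y x))"
    using integrable_\<kappa> by simp
  show ?thesis
    using variance_eq[OF integrable_inner_\<kappa>[of \<beta>] square_integrable_inner_\<kappa>[of \<beta>]]
    unfolding square mean .
qed

lemma continuous_on_variance_inner: "continuous_on S (\<lambda>\<beta>. variance (\<lambda>x. \<beta> \<bullet> \<kappa> (Y x)))"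
  unfolding variance_inner_eq_quadratic_form by (intro continuous_intros)

lemma variance_inner_scaleR: "variance (\<lambda>x. (t *\<^sub>R \<beta>) \<bullet> \<kappa> (Y x)) = t\<^sup>2 * variance (\<lambda>x. \<beta> \<bullet> \<kappa> (Y x))"
  unfolding variance_inner_eq_quadratic_form
  by (simp add: sum_distrib_left right_diff_distrib power_mult_distrib power2_eq_square mult_ac)

lemma variance_inner_add_degenerate:
  assumes "y \<in> degenerate_directions"
  shows "variance (\<lambda>x. (z + y) \<bullet> \<kappa> (Y x)) = variance (\<lambda>x. z \<bullet> \<kappa> (Y x))"
proof -
  obtain c where c: "AE x in M. y \<bullet> \<kappa> (Y x) = c"
    using assms by (auto simp: degenerate_directions_def)
  then have shift: "AE x in M. (z + y) \<bullet> \<kappa> (Y x) = z \<bullet> \<kappa> (Y x) + c"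
    by eventually_elim (simp add: inner_add_left)
  have "expectation (\<lambda>x. (z + y) \<bullet> \<kappa> (Y x)) = expectation (\<lambda>x. z \<bullet> \<kappa> (Y x) + c)"
    by (rule integral_cong_AE) (use shift in auto)
  also have "\<dots> = expectation (\<lambda>x. z \<bullet> \<kappa> (Y x)) + c"
    using integrable_inner_\<kappa>[of z] by (simp add: prob_space)
  finally show ?thesis
    by (intro integral_cong_AE) (use shift in auto)
qed

lemma variance_inner_eq_0_imp_degenerate:
  assumes "variance (\<lambda>x. \<beta> \<bullet> \<kappa> (Y x)) = 0"
  shows "\<beta> \<in> degenerate_directions"
proof -
  define E where "E = expectation (\<lambda>x. \<beta> \<bullet> \<kappa> (Y x))"
  have "integrable M (\<lambda>x. (\<beta> \<bullet> \<kappa> (Y x) - E)\<^sup>2)"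
    using integrable_inner_\<kappa>[of \<beta>] square_integrable_inner_\<kappa>[of \<beta>]
    by (simp add: power2_diff)
  from integral_nonneg_eq_0_iff_AE[OF this] have "AE x in M. (\<beta> \<bullet> \<kappa> (Y x) - E)\<^sup>2 = 0"
    using assms by (simp add: E_def)
  then have "AE x in M. \<beta> \<bullet> \<kappa> (Y x) = E"
    by eventually_elim simp
  then show ?thesis
    by (auto simp: degenerate_directions_def)
qed

lemma variance_inner_coercive:
  obtains m where "m > 0"
    and "\<And>z. z \<in> degenerate_directions\<^sup>\<bottom> \<Longrightarrow> m * (norm z)\<^sup>2 \<le> variance (\<lambda>x. z \<bullet> \<kappa> (Y x))"
proof -
  define var where "var \<beta> = variance (\<lambda>x. \<beta> \<bullet> \<kappa> (Y x))" for \<beta>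
  define S where "S = sphere 0 1 \<inter> degenerate_directions\<^sup>\<bottom>"
  have subspace: "subspace (degenerate_directions\<^sup>\<bottom>)"
    by (rule subspace_orthogonal_comp)
  have "compact S"
    unfolding S_def by (intro compact_Int_closed compact_sphere closed_subspace subspace)
  obtain m where "m > 0" and m: "\<And>u. u \<in> S \<Longrightarrow> m \<le> var u"
  proof (cases "S = {}")
    case False
    obtain u where u: "u \<in> S" and min: "\<And>w. w \<in> S \<Longrightarrow> var u \<le> var w"
      using continuous_attains_inf[OF \<open>compact S\<close> False continuous_on_variance_inner]
      by (auto simp: var_def)
    have "var u \<noteq> 0"
    proof
      assume "var u = 0"
      then have "u \<in> degenerate_directions \<inter> degenerate_directions\<^sup>\<bottom>"
        using u variance_inner_eq_0_imp_degenerate by (auto simp: var_def S_def)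
      then show False
        using u orthogonal_Int_0[OF subspace_degenerate_directions] by (auto simp: S_def)
    qed
    moreover have "0 \<le> var u"
      unfolding var_def by (rule variance_positive)
    ultimately show ?thesis
      using min by (intro that[of "var u"]) auto
  qed (use that[of 1] in auto)
  show ?thesis
  proof (rule that[OF \<open>m > 0\<close>])
    fix z assume z: "z \<in> degenerate_directions\<^sup>\<bottom>"
    show "m * (norm z)\<^sup>2 \<le> variance (\<lambda>x. z \<bullet> \<kappa> (Y x))"
    proof (cases "z = 0")
      case False
      have "(1 / norm z) *\<^sub>R z \<in> S"
        using z False subspace_scale[OF subspace z] by (simp add: S_def)
      then have "m \<le> var ((1 / norm z) *\<^sub>R z)"
        by (rule m)
      then have "m * (norm z)\<^sup>2 \<le> var ((1 / norm z) *\<^sub>R z) * (norm z)\<^sup>2"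
        by (rule mult_right_mono) simp
      also have "\<dots> = var z"
        unfolding var_def variance_inner_scaleR using False by (simp add: power_divide)
      finally show ?thesis
        by (simp add: var_def)
    qed (simp add: variance_positive)
  qed
qed

lemma cond_var_event_le_square_dist:
  assumes [measurable]: "A \<in> sets M" and "prob A > 0" and "y \<in> degenerate_directions"
  shows "cond_var_event M (\<lambda>x. (z + y) \<bullet> \<kappa> (Y x)) A
     \<le> (norm z)\<^sup>2 * (\<integral>x. indicator A x * (norm (\<kappa> (Y x) - v))\<^sup>2 \<partial>M) / prob A"
proof -
  obtain c where c: "AE x in M. y \<bullet> \<kappa> (Y x) = c"
    using assms(3) by (auto simp: degenerate_directions_def)
  have "cond_var_event M (\<lambda>x. (z + y) \<bullet> \<kappa> (Y x)) A
      \<le> (\<integral>x. indicator A x * ((z + y) \<bullet> \<kappa> (Y x) - (z \<bullet> v + c))\<^sup>2 \<partial>M) / prob A"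
    using \<open>prob A > 0\<close> square_integrable_inner_\<kappa> by (intro cond_var_event_le) auto
  also have "(\<integral>x. indicator A x * ((z + y) \<bullet> \<kappa> (Y x) - (z \<bullet> v + c))\<^sup>2 \<partial>M)
      = (\<integral>x. indicator A x * (z \<bullet> (\<kappa> (Y x) - v))\<^sup>2 \<partial>M)"
    by (rule integral_cong_AE) (use c in \<open>auto simp: inner_add_left inner_diff_right\<close>)
  also have "\<dots> \<le> (\<integral>x. (norm z)\<^sup>2 * (indicator A x * (norm (\<kappa> (Y x) - v))\<^sup>2) \<partial>M)"
  proof (rule integral_mono')
    show "integrable M (\<lambda>x. (norm z)\<^sup>2 * (indicator A x * (norm (\<kappa> (Y x) - v))\<^sup>2))"
      using integrable_real_mult_indicator[OF _ integrable_square_dist[of v], of A] by (simp add: mult.commute)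
    fix x
    show "indicator A x * (z \<bullet> (\<kappa> (Y x) - v))\<^sup>2 \<le> (norm z)\<^sup>2 * (indicator A x * (norm (\<kappa> (Y x) - v))\<^sup>2)"
      using Cauchy_Schwarz_ineq[of z "\<kappa> (Y x) - v"] by (simp add: indicator_def power2_norm_eq_inner)
  qed simp
  finally show ?thesis
    using \<open>prob A > 0\<close> by (simp add: divide_right_mono)
qed

lemma sliced_cond_var_le:
  assumes large: "\<forall>h<H. (1 - \<gamma>) / real H \<le> prob (slice_event M Y a h)"
    and "\<gamma> < 1" and "H > 0" and "y \<in> degenerate_directions"
  shows "(1 / real H) * (\<Sum>h<H. cond_var_event M (\<lambda>x. (z + y) \<bullet> \<kappa> (Y x)) (slice_event M Y a h))
    \<le> (norm z)\<^sup>2 / (1 - \<gamma>) * (\<Sum>h<H. \<integral>x. indicator (slice_event M Y a h) x * (norm (\<kappa> (Y x) - v h))\<^sup>2 \<partial>M)"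
proof -
  define A where "A h = slice_event M Y a h" for h
  define J where "J h = (\<integral>x. indicator (A h) x * (norm (\<kappa> (Y x) - v h))\<^sup>2 \<partial>M)" for h
  have J_nonneg: "J h \<ge> 0" for h
    unfolding J_def by (intro integral_nonneg_AE) auto
  have lower: "1 - \<gamma> \<le> real H * prob (A h)" and positive: "prob (A h) > 0" if "h < H" for h
  proof -
    show "1 - \<gamma> \<le> real H * prob (A h)"
      using large that \<open>H > 0\<close> by (simp add: A_def field_simps)
    then show "prob (A h) > 0"
      using \<open>\<gamma> < 1\<close> by (smt (verit) mult_nonneg_nonpos of_nat_0_le_iff)
  qed
  have "(1 / real H) * (\<Sum>h<H. cond_var_event M (\<lambda>x. (z + y) \<bullet> \<kappa> (Y x)) (A h))
      \<le> (1 / real H) * (\<Sum>h<H. (norm z)\<^sup>2 * J h / prob (A h))"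
    unfolding J_def using positive \<open>y \<in> degenerate_directions\<close>
    by (intro mult_left_mono sum_mono cond_var_event_le_square_dist) (auto simp: A_def)
  also have "\<dots> = (\<Sum>h<H. (norm z)\<^sup>2 * J h / (real H * prob (A h)))"
    by (simp add: sum_distrib_left)
  also have "\<dots> \<le> (\<Sum>h<H. (norm z)\<^sup>2 * J h / (1 - \<gamma>))"
    using lower positive J_nonneg \<open>\<gamma> < 1\<close> \<open>H > 0\<close>
    by (intro sum_mono divide_left_mono) (auto intro!: mult_pos_pos)
  also have "\<dots> = (norm z)\<^sup>2 / (1 - \<gamma>) * (\<Sum>h<H. J h)"
    by (simp add: sum_distrib_left sum_divide_distrib)
  finally show ?thesis
    by (simp add: A_def J_def)
qed

lemma sliced_cond_var_le_variance:
  assumes large: "\<forall>h<H. (1 - \<gamma>) / real H \<le> prob (slice_event M Y a h)"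
    and "\<gamma> < 1" and "H > 0" and "\<tau> > 0"
    and coercive: "\<And>z. z \<in> degenerate_directions\<^sup>\<bottom> \<Longrightarrow> m * (norm z)\<^sup>2 \<le> variance (\<lambda>x. z \<bullet> \<kappa> (Y x))"
    and approx: "(\<Sum>h<H. \<integral>x. indicator (slice_event M Y a h) x * (norm (\<kappa> (Y x) - v h))\<^sup>2 \<partial>M)
      \<le> m * (1 - \<gamma>) / \<tau>"
  shows "(1 / real H) * (\<Sum>h<H. cond_var_event M (\<lambda>x. \<beta> \<bullet> \<kappa> (Y x)) (slice_event M Y a h))
    \<le> (1 / \<tau>) * variance (\<lambda>x. \<beta> \<bullet> \<kappa> (Y x))"
proof -
  have "\<beta> \<in> degenerate_directions + degenerate_directions\<^sup>\<bottom>"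
    using subspace_sum_orthogonal_comp[OF subspace_degenerate_directions] by simp
  then obtain y z where "\<beta> = y + z" "y \<in> degenerate_directions" "z \<in> degenerate_directions\<^sup>\<bottom>"
    by (rule set_plus_elim)
  then have \<beta>: "\<beta> = z + y"
    by (simp add: add.commute)
  have "(1 / real H) * (\<Sum>h<H. cond_var_event M (\<lambda>x. \<beta> \<bullet> \<kappa> (Y x)) (slice_event M Y a h))
      \<le> (norm z)\<^sup>2 / (1 - \<gamma>) *
        (\<Sum>h<H. \<integral>x. indicator (slice_event M Y a h) x * (norm (\<kappa> (Y x) - v h))\<^sup>2 \<partial>M)"
    unfolding \<beta> using large \<open>\<gamma> < 1\<close> \<open>H > 0\<close> \<open>y \<in> degenerate_directions\<close>
    by (rule sliced_cond_var_le)
  also have "\<dots> \<le> (norm z)\<^sup>2 / (1 - \<gamma>) * (m * (1 - \<gamma>) / \<tau>)"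
    using approx \<open>\<gamma> < 1\<close> by (intro mult_left_mono) auto
  also have "\<dots> = (1 / \<tau>) * (m * (norm z)\<^sup>2)"
    using \<open>\<gamma> < 1\<close> \<open>\<tau> > 0\<close> by (simp add: field_simps)
  also have "\<dots> \<le> (1 / \<tau>) * variance (\<lambda>x. \<beta> \<bullet> \<kappa> (Y x))"
    unfolding \<beta> variance_inner_add_degenerate[OF \<open>y \<in> degenerate_directions\<close>]
    using coercive[OF \<open>z \<in> _\<close>] \<open>\<tau> > 0\<close> by (intro mult_left_mono) auto
  finally show ?thesis .
qed

end

lemma weak_sliced_stable_eventually:
  fixes \<kappa> :: "real \<Rightarrow> real ^ 'p"
  assumes "curve_of_random_variable M Y \<kappa>" and "0 < \<gamma>" "\<gamma> < 1" "\<tau> > 1"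
  obtains K0 where "\<And>K. K0 \<le> K \<Longrightarrow> weak_sliced_stable \<gamma> M Y \<kappa> K \<tau>"
proof -
  interpret curve_of_random_variable M Y \<kappa>
    by fact
  obtain m where "m > 0"
    and coercive: "\<And>z. z \<in> degenerate_directions\<^sup>\<bottom> \<Longrightarrow> m * (norm z)\<^sup>2 \<le> variance (\<lambda>x. z \<bullet> \<kappa> (Y x))"
    using variance_inner_coercive by blast
  have "m * (1 - \<gamma>) / \<tau> > 0" and "1 + \<gamma> > 0"
    using \<open>m > 0\<close> assms by simp_all
  then obtain K0 where approx: "\<And>H a. K0 \<le> H \<Longrightarrow> a 0 = -\<infinity> \<Longrightarrow> a H = \<infinity> \<Longrightarrow> \<forall>h<H. a h < a (Suc h) \<Longrightarrow>
      \<forall>h<H. prob (slice_event M Y a h) \<le> (1 + \<gamma>) / real H \<Longrightarrow>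
      \<exists>v. (\<Sum>h<H. \<integral>x. indicator (slice_event M Y a h) x * (norm (\<kappa> (Y x) - v h))\<^sup>2 \<partial>M)
        \<le> m * (1 - \<gamma>) / \<tau>"
    using slices_approximable by blast
  show ?thesis
  proof (rule that[of K0])
    fix K assume "K0 \<le> K"
    show "weak_sliced_stable \<gamma> M Y \<kappa> K \<tau>"
      unfolding weak_sliced_stable_def
    proof (intro allI impI)
      fix H :: nat and a :: "nat \<Rightarrow> ereal" and \<beta> :: "real ^ 'p"
      assume partition: "K \<le> H \<and> a 0 = -\<infinity> \<and> a H = \<infinity> \<and> (\<forall>h<H. a h < a (Suc h)) \<and>
        (\<forall>h<H. (1 - \<gamma>) / real H \<le> prob (slice_event M Y a h) \<and> prob (slice_event M Y a h) \<le> (1 + \<gamma>) / real H)"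
      have "H > 0"
      proof (rule ccontr)
        assume "\<not> H > 0"
        then show False
          using partition by auto
      qed
      obtain v where "(\<Sum>h<H. \<integral>x. indicator (slice_event M Y a h) x * (norm (\<kappa> (Y x) - v h))\<^sup>2 \<partial>M)
          \<le> m * (1 - \<gamma>) / \<tau>"
        using approx[of H a] partition \<open>K0 \<le> K\<close> by auto
      then show "(1 / real H) * (\<Sum>h<H. cond_var_event M (\<lambda>x. \<beta> \<bullet> \<kappa> (Y x)) (slice_event M Y a h))
          \<le> (1 / \<tau>) * variance (\<lambda>x. \<beta> \<bullet> \<kappa> (Y x))"
        using partition \<open>H > 0\<close> assms coercive by (intro sliced_cond_var_le_variance) auto
    qed
  qed
qed

lemma square_le_one_plus_powr:
  fixes z l :: real
  assumes "l \<ge> 2"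
  shows "z\<^sup>2 \<le> 1 + \<bar>z\<bar> powr l"
proof (cases "\<bar>z\<bar> \<le> 1")
  case True
  then have "z\<^sup>2 \<le> 1"
    by (simp add: abs_square_le_1)
  then show ?thesis
    by (simp add: add_increasing2)
next
  case False
  then have "\<bar>z\<bar> powr 2 \<le> \<bar>z\<bar> powr l"
    using assms by (intro powr_mono) auto
  then show ?thesis
    using False by (simp add: powr_numeral)
qed

lemma (in finite_measure) square_integrable_norm_if_moments:
  fixes X :: "'a \<Rightarrow> 'b::euclidean_space"
  assumes [measurable]: "X \<in> borel_measurable M" and "l \<ge> 2"
    and moments: "\<And>\<beta>. norm \<beta> = 1 \<Longrightarrow> integrable M (\<lambda>x. \<bar>X x \<bullet> \<beta>\<bar> powr l)"
  shows "integrable M (\<lambda>x. (norm (X x))\<^sup>2)"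
proof -
  have "integrable M (\<lambda>x. (X x \<bullet> b)\<^sup>2)" if "b \<in> Basis" for b
  proof (rule Bochner_Integration.integrable_bound)
    show "integrable M (\<lambda>x. 1 + \<bar>X x \<bullet> b\<bar> powr l)"
      using moments[of b] that by simp
    show "AE x in M. norm ((X x \<bullet> b)\<^sup>2) \<le> norm (1 + \<bar>X x \<bullet> b\<bar> powr l)"
      using square_le_one_plus_powr[OF \<open>l \<ge> 2\<close>] by (intro AE_I2) simp
  qed measurable
  moreover have "(norm (X x))\<^sup>2 = (\<Sum>b\<in>Basis. (X x \<bullet> b)\<^sup>2)" for x
    unfolding power2_norm_eq_inner by (subst euclidean_inner) (simp add: power2_eq_square)
  ultimately show ?thesis
    by simp
qed

theorem mainTheorem10:
  fixes \<gamma> :: real and M :: "'a measure" and Y :: "'a \<Rightarrow> real"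
    and \<kappa> :: "real \<Rightarrow> real ^ 'p" and l c1 :: real
  assumes "0 < \<gamma>" and "\<gamma> < 1"
    and "prob_space M"
    and "Y \<in> borel_measurable M"
    and "continuous_on UNIV \<kappa>"
    and "\<exists>y. \<kappa> y \<noteq> 0"
    and "l > 2" and "c1 > 0"
    and "\<And>\<beta>. norm \<beta> = 1 \<Longrightarrow> integrable M (\<lambda>x. \<bar>\<kappa> (Y x) \<bullet> \<beta>\<bar> powr l)"
    and "\<And>\<beta>. norm \<beta> = 1 \<Longrightarrow> (\<integral>x. \<bar>\<kappa> (Y x) \<bullet> \<beta>\<bar> powr l \<partial>M) \<le> c1"
    and "absolutely_continuous lborel (distr M lborel Y)"
  shows "\<forall>\<tau>>1. \<exists>K::nat. K \<ge> dim (span (range \<kappa>)) \<and> weak_sliced_stable \<gamma> M Y \<kappa> K \<tau>"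
proof (intro allI impI)
  fix \<tau> :: real assume "\<tau> > 1"
  interpret prob_space M
    by fact
  have "(\<lambda>x. \<kappa> (Y x)) \<in> borel_measurable M"
    using measurable_compose[OF assms(4) borel_measurable_continuous_onI[OF assms(5)]] by (simp add: o_def)
  then have "integrable M (\<lambda>x. (norm (\<kappa> (Y x)))\<^sup>2)"
    by (rule square_integrable_norm_if_moments[where l = l]) (use assms(7,9) in auto)
  then have "curve_of_random_variable M Y \<kappa>"
    using assms(4,5) by unfold_locales
  then obtain K0 where "\<And>K. K0 \<le> K \<Longrightarrow> weak_sliced_stable \<gamma> M Y \<kappa> K \<tau>"
    using weak_sliced_stable_eventually assms(1,2) \<open>\<tau> > 1\<close> by blast
  then show "\<exists>K. K \<ge> dim (span (range \<kappa>)) \<and> weak_sliced_stable \<gamma> M Y \<kappa> K \<tau>"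
    by (intro exI[of _ "max K0 (dim (span (range \<kappa>)))"]) auto
qed

end
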